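(* Let $V=\{0,\tfrac12,1\}$ and consider any sentential language with an atomic expressive semantics whose consequence relation is induced by the truth-relation $ss\cap tt$. Then no unary connective of the language (with any truth function) is a G-negation.
   Context: $ss\cap tt=\models_{\{1\},\{1\}}\cap\models_{\{1,\frac12\},\{1,\frac12\}}$, where $\gamma\models_{\mathcal{D}_p,\mathcal{D}_c}\delta$ iff ($\gamma\subseteq\mathcal{D}_p\Rightarrow\delta\cap\mathcal{D}_c\neq\emptyset$). A semantics: set of valuations mapping atoms to $V$, interpreting each connective by a truth function fixed across valuations, extended compositionally, such that every assignment of values to finitely many distinct atoms is realized. Atomic expressive: for every $\gamma\subseteq V$ there are a set of formulas $\Gamma$ and a valuation $v$ with $v(\Gamma)=\gamma$. Consequence: $\Gamma\vdash\Delta$ iff $v(\Gamma)\models v(\Delta)$ for all $v$; $\Gamma,A$ denotes $\Gamma\cup\{A\}$. A G-negation $\neg$ satisfies for all $\Gamma,\Delta,A$: $\Gamma,\neg A\vdash\Delta$ iff $\Gamma\vdash A,\Delta$; and $\Gamma\vdash\neg A,\Delta$ iff $\Gamma,A\vdash\Delta$. *)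

theory Defs
  imports Main
begin

datatype val = V0 | Vh | V1

definition tmodels :: "val set \<Rightarrow> val set \<Rightarrow> val set \<Rightarrow> val set \<Rightarrow> bool" where
  "tmodels Dp Dc \<gamma> \<delta> \<longleftrightarrow> (\<gamma> \<subseteq> Dp \<longrightarrow> \<delta> \<inter> Dc \<noteq> {})"

definition ss_tt :: "val set \<Rightarrow> val set \<Rightarrow> bool" where
  "ss_tt \<gamma> \<delta> \<longleftrightarrow> tmodels {V1} {V1} \<gamma> \<delta> \<and> tmodels {V1, Vh} {V1, Vh} \<gamma> \<delta>"

datatype ('a, 'c) form = Atom 'a | Conn 'c "('a, 'c) form list"

fun wff :: "('c \<Rightarrow> nat) \<Rightarrow> ('a, 'c) form \<Rightarrow> bool" where
  "wff ar (Atom p) = True"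
| "wff ar (Conn c As) = (length As = ar c \<and> list_all (wff ar) As)"

fun eval :: "('c \<Rightarrow> val list \<Rightarrow> val) \<Rightarrow> ('a \<Rightarrow> val) \<Rightarrow> ('a, 'c) form \<Rightarrow> val" where
  "eval tf v (Atom p) = v p"
| "eval tf v (Conn c As) = tf c (map (eval tf v) As)"

text \<open>A semantics (given by its atomic valuations) realizes every assignment
  of values to finitely many distinct atoms.\<close>
definition is_semantics :: "('a \<Rightarrow> val) set \<Rightarrow> bool" where
  "is_semantics S \<longleftrightarrow> (\<forall>P f. finite P \<longrightarrow> (\<exists>v\<in>S. \<forall>p\<in>P. v p = f p))"

definition atomic_expressive ::
  "('c \<Rightarrow> nat) \<Rightarrow> ('c \<Rightarrow> val list \<Rightarrow> val) \<Rightarrow> ('a \<Rightarrow> val) set \<Rightarrow> bool" where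
  "atomic_expressive ar tf S \<longleftrightarrow>
     (\<forall>\<gamma>. \<exists>\<Gamma>. (\<forall>A\<in>\<Gamma>. wff ar A) \<and> (\<exists>v\<in>S. eval tf v ` \<Gamma> = \<gamma>))"

definition conseq ::
  "('c \<Rightarrow> val list \<Rightarrow> val) \<Rightarrow> ('a \<Rightarrow> val) set \<Rightarrow> ('a, 'c) form set \<Rightarrow> ('a, 'c) form set \<Rightarrow> bool" where
  "conseq tf S \<Gamma> \<Delta> \<longleftrightarrow> (\<forall>v\<in>S. ss_tt (eval tf v ` \<Gamma>) (eval tf v ` \<Delta>))"

definition G_negation ::
  "('c \<Rightarrow> nat) \<Rightarrow> ('c \<Rightarrow> val list \<Rightarrow> val) \<Rightarrow> ('a \<Rightarrow> val) set \<Rightarrow> 'c \<Rightarrow> bool" where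
  "G_negation ar tf S c \<longleftrightarrow>
     (\<forall>\<Gamma> \<Delta> A. (\<forall>B\<in>\<Gamma>. wff ar B) \<longrightarrow> (\<forall>B\<in>\<Delta>. wff ar B) \<longrightarrow> wff ar A \<longrightarrow>
        (conseq tf S (insert (Conn c [A]) \<Gamma>) \<Delta> \<longleftrightarrow> conseq tf S \<Gamma> (insert A \<Delta>)) \<and>
        (conseq tf S \<Gamma> (insert (Conn c [A]) \<Delta>) \<longleftrightarrow> conseq tf S (insert A \<Gamma>) \<Delta>))"

end

theory Submission
  imports Defs
begin

(* A G-negation turns the reflexivity A |- A into both  -A, A |-  and  |- -A, A.
   Under ss \<inter> tt an empty conclusion is valid iff the premises contain 0, and
   empty premises are valid iff the conclusions contain 1.  Evaluating at an atom
   with value 1/2 therefore forces the truth function of the negation to send 1/2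
   both to 0 and to 1. *)

lemma ss_tt_empty_conclusions_iff: "ss_tt \<gamma> {} \<longleftrightarrow> V0 \<in> \<gamma>"
proof -
  have "\<gamma> \<subseteq> {V1, Vh} \<longleftrightarrow> V0 \<notin> \<gamma>"
    using val.exhaust by auto
  then show ?thesis
    unfolding ss_tt_def tmodels_def by auto
qed

lemma ss_tt_empty_premises_iff: "ss_tt {} \<delta> \<longleftrightarrow> V1 \<in> \<delta>"
  unfolding ss_tt_def tmodels_def by auto

lemma conseq_refl: "conseq tf S {A} {A}"
  unfolding conseq_def ss_tt_def tmodels_def by auto

lemma G_negation_contradiction:
  assumes "G_negation ar tf S c" and "wff ar A"
  shows "conseq tf S {Conn c [A], A} {}"
proof -
  have "conseq tf S (insert (Conn c [A]) {A}) {} \<longleftrightarrow> conseq tf S {A} (insert A {})"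
    using assms unfolding G_negation_def by simp
  then show ?thesis
    using conseq_refl[of tf S A] by simp
qed

lemma G_negation_excluded_middle:
  assumes "G_negation ar tf S c" and "wff ar A"
  shows "conseq tf S {} {Conn c [A], A}"
proof -
  have "conseq tf S {} (insert (Conn c [A]) {A}) \<longleftrightarrow> conseq tf S (insert A {}) {A}"
    using assms unfolding G_negation_def by simp
  then show ?thesis
    using conseq_refl[of tf S A] by simp
qed

theorem theorem4p3:
  fixes ar :: "'c \<Rightarrow> nat" and tf :: "'c \<Rightarrow> val list \<Rightarrow> val"
    and S :: "('a \<Rightarrow> val) set" and c :: 'c
  assumes "is_semantics S"
    and "atomic_expressive ar tf S"
    and "ar c = 1"
  shows "\<not> G_negation ar tf S c"
proof
  assume G: "G_negation ar tf S c"
  fix p :: 'a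
  obtain v where "v \<in> S" and "v p = Vh"
    using assms(1)[unfolded is_semantics_def, rule_format, of "{p}" "\<lambda>_. Vh"] by auto
  have "ss_tt (eval tf v ` {Conn c [Atom p], Atom p}) (eval tf v ` {})"
    using G_negation_contradiction[OF G, of "Atom p"] \<open>v \<in> S\<close> unfolding conseq_def by auto
  then have "tf c [Vh] = V0"
    using \<open>v p = Vh\<close> by (simp add: ss_tt_empty_conclusions_iff)
  moreover have "ss_tt (eval tf v ` {}) (eval tf v ` {Conn c [Atom p], Atom p})"
    using G_negation_excluded_middle[OF G, of "Atom p"] \<open>v \<in> S\<close> unfolding conseq_def by auto
  then have "tf c [Vh] = V1"
    using \<open>v p = Vh\<close> by (simp add: ss_tt_empty_premises_iff)
  ultimately show False
    by simp
qed

end
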